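(* Let $\mathcal{H}$ be an infinite-dimensional separable Hilbert space with inner product $\langle\cdot,\cdot\rangle$ (linear in the second argument), $\mathcal{D}\subseteq\mathcal{H}$ a dense subspace, $\{e_n\}_{n\ge0}$ an orthonormal basis of $\mathcal{H}$ with $e_n\in\mathcal{D}$, and $R$ a bounded operator with bounded inverse such that $\mathcal{D}$ is stable under $R,R^\dagger,R^{-1},(R^{-1})^\dagger$. Put $\varphi_n=Re_n$, $\psi_n=(R^{-1})^\dagger e_n$. Let $H$ be an operator with $D(H)\supseteq\mathcal{D}$, $D(H^\dagger)\supseteq\mathcal{D}$, $H\mathcal{D}\subseteq\mathcal{D}$, and suppose $H$ is $(\varphi,\psi)$-tridiagonal, i.e. there are complex sequences $\{b_n\},\{a_n\},\{b_n'\}$ with $\langle\psi_n,H\varphi_m\rangle=b_n\delta_{n,m+1}+a_n\delta_{n,m}+b_n'\delta_{n,m-1}$ for all $n,m\ge0$; set $b'_{-1}=0$. Let $H_0:=R^{-1}HR$. If $H_0=H_0^\dagger$, then $a_n\in\mathbb{R}$ for all $n$ and $b_m=\overline{b'_{m-1}}$ for all $m\ge0$. Conversely, if $a_m\in\mathbb{R}$ and $b_m=\overline{b'_{m-1}}$ for all $m\ge0$, then $\langle f,H_0g\rangle=\langle H_0f,g\rangle$ for all $f,g$ in the linear span $\mathcal{E}$ of $\{e_n\}$. *)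

theory Defs
  imports Complex_Main
begin

definition hnorm :: "('h \<Rightarrow> 'h \<Rightarrow> complex) \<Rightarrow> 'h \<Rightarrow> real" where
  "hnorm ip x = sqrt (Re (ip x x))"

definition complex_hilbert ::
  "(complex \<Rightarrow> 'h::ab_group_add \<Rightarrow> 'h) \<Rightarrow> ('h \<Rightarrow> 'h \<Rightarrow> complex) \<Rightarrow> bool" where
  "complex_hilbert sc ip \<longleftrightarrow>
     (\<forall>a x y. sc a (x + y) = sc a x + sc a y) \<and>
     (\<forall>a b x. sc (a + b) x = sc a x + sc b x) \<and>
     (\<forall>a b x. sc a (sc b x) = sc (a * b) x) \<and>
     (\<forall>x. sc 1 x = x) \<and>
     (\<forall>x y z. ip x (y + z) = ip x y + ip x z) \<and>
     (\<forall>c x y. ip x (sc c y) = c * ip x y) \<and>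
     (\<forall>x y. ip y x = cnj (ip x y)) \<and>
     (\<forall>x. Re (ip x x) \<ge> 0) \<and>
     (\<forall>x. ip x x = 0 \<longrightarrow> x = 0) \<and>
     (\<forall>X :: nat \<Rightarrow> 'h.
        (\<forall>\<epsilon>>0. \<exists>N. \<forall>m\<ge>N. \<forall>n\<ge>N. hnorm ip (X m - X n) < \<epsilon>) \<longrightarrow>
        (\<exists>L. \<forall>\<epsilon>>0. \<exists>N. \<forall>n\<ge>N. hnorm ip (X n - L) < \<epsilon>))"

definition hsubspace :: "(complex \<Rightarrow> 'h::ab_group_add \<Rightarrow> 'h) \<Rightarrow> 'h set \<Rightarrow> bool" where
  "hsubspace sc S \<longleftrightarrow> 0 \<in> S \<and> (\<forall>x\<in>S. \<forall>y\<in>S. x + y \<in> S) \<and> (\<forall>c. \<forall>x\<in>S. sc c x \<in> S)"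

definition hdense :: "('h::ab_group_add \<Rightarrow> 'h \<Rightarrow> complex) \<Rightarrow> 'h set \<Rightarrow> bool" where
  "hdense ip S \<longleftrightarrow> (\<forall>x. \<forall>\<epsilon>>0. \<exists>d\<in>S. hnorm ip (x - d) < \<epsilon>)"

definition orthonormal_basis :: "('h::ab_group_add \<Rightarrow> 'h \<Rightarrow> complex) \<Rightarrow> (nat \<Rightarrow> 'h) \<Rightarrow> bool" where
  "orthonormal_basis ip e \<longleftrightarrow>
     (\<forall>n m. ip (e n) (e m) = (if n = m then 1 else 0)) \<and>
     (\<forall>f. (\<forall>n. ip (e n) f = 0) \<longrightarrow> f = 0)"

definition hlinear :: "(complex \<Rightarrow> 'h::ab_group_add \<Rightarrow> 'h) \<Rightarrow> ('h \<Rightarrow> 'h) \<Rightarrow> bool" where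
  "hlinear sc T \<longleftrightarrow> (\<forall>x y. T (x + y) = T x + T y) \<and> (\<forall>c x. T (sc c x) = sc c (T x))"

definition hbounded :: "('h \<Rightarrow> 'h \<Rightarrow> complex) \<Rightarrow> ('h \<Rightarrow> 'h) \<Rightarrow> bool" where
  "hbounded ip T \<longleftrightarrow> (\<exists>C. \<forall>x. hnorm ip (T x) \<le> C * hnorm ip x)"

definition badj :: "('h \<Rightarrow> 'h \<Rightarrow> complex) \<Rightarrow> ('h \<Rightarrow> 'h) \<Rightarrow> 'h \<Rightarrow> 'h" where
  "badj ip T y = (THE z. \<forall>x. ip z x = ip y (T x))"

definition lin_op :: "(complex \<Rightarrow> 'h::ab_group_add \<Rightarrow> 'h) \<Rightarrow> 'h set \<Rightarrow> ('h \<Rightarrow> 'h) \<Rightarrow> bool" where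
  "lin_op sc Dm T \<longleftrightarrow> hsubspace sc Dm \<and>
     (\<forall>x\<in>Dm. \<forall>y\<in>Dm. T (x + y) = T x + T y) \<and> (\<forall>c. \<forall>x\<in>Dm. T (sc c x) = sc c (T x))"

definition adj_dom :: "('h \<Rightarrow> 'h \<Rightarrow> complex) \<Rightarrow> 'h set \<Rightarrow> ('h \<Rightarrow> 'h) \<Rightarrow> 'h set" where
  "adj_dom ip Dm T = {g. \<exists>h. \<forall>f\<in>Dm. ip g (T f) = ip h f}"

definition adj_op :: "('h \<Rightarrow> 'h \<Rightarrow> complex) \<Rightarrow> 'h set \<Rightarrow> ('h \<Rightarrow> 'h) \<Rightarrow> 'h \<Rightarrow> 'h" where
  "adj_op ip Dm T g = (THE h. \<forall>f\<in>Dm. ip g (T f) = ip h f)"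

definition self_adjoint_op :: "('h \<Rightarrow> 'h \<Rightarrow> complex) \<Rightarrow> 'h set \<Rightarrow> ('h \<Rightarrow> 'h) \<Rightarrow> bool" where
  "self_adjoint_op ip Dm T \<longleftrightarrow> adj_dom ip Dm T = Dm \<and> (\<forall>g\<in>Dm. adj_op ip Dm T g = T g)"

definition hspan :: "(complex \<Rightarrow> 'h::ab_group_add \<Rightarrow> 'h) \<Rightarrow> (nat \<Rightarrow> 'h) \<Rightarrow> 'h set" where
  "hspan sc e = {(\<Sum>n<N. sc (c n) (e n)) | N c. True}"

end

theory Submission
  imports Defs "HOL-Analysis.Elementary_Normed_Spaces"
begin

(* The matrix of H0 = R^-1 H R in the basis e is the given tridiagonal matrix:
   <e n, H0 (e m)> = <psi n, H (phi m)> because psi n = (R^-1)^dagger (e n).  Making this precise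
   needs the adjoint of the bounded operator R^-1, which is built from the basis as
   sum_k conj <y, T (e k)> e k, Bessel's inequality and Riesz-Fischer supplying convergence.
   A self-adjoint H0 has a Hermitian matrix, and a tridiagonal matrix is Hermitian exactly when
   its diagonal is real and b (m+1) = conj (b' m); conversely, a Hermitian matrix gives
   <f, H0 g> = <H0 f, g> on finite linear combinations of the basis by sesquilinearity. *)

lemma hsubspace_sum:
  assumes "hsubspace sc S" and "\<And>k. k \<in> A \<Longrightarrow> x k \<in> S"
  shows "sum x A \<in> S"
  using assms(2)
  by (induct A rule: infinite_finite_induct) (use assms(1) in \<open>auto simp: hsubspace_def\<close>)

lemma lin_op_zero: "lin_op sc Dm T \<Longrightarrow> T 0 = 0"
  unfolding lin_op_def hsubspace_def by (metis add_cancel_right_right add_0)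

lemma lin_op_sum:
  assumes T: "lin_op sc Dm T" and x: "\<And>k. k \<in> A \<Longrightarrow> x k \<in> Dm"
  shows "T (\<Sum>k\<in>A. sc (c k) (x k)) = (\<Sum>k\<in>A. sc (c k) (T (x k)))"
  using x
proof (induction A rule: infinite_finite_induct)
  case (insert k A)
  have "sc (c k) (x k) \<in> Dm" and "(\<Sum>j\<in>A. sc (c j) (x j)) \<in> Dm"
    using T insert.prems hsubspace_sum[of sc Dm A] unfolding lin_op_def hsubspace_def by auto
  then have "T (\<Sum>j\<in>insert k A. sc (c j) (x j)) = T (sc (c k) (x k)) + T (\<Sum>j\<in>A. sc (c j) (x j))"
    using T insert.hyps unfolding lin_op_def by simp
  also have "T (sc (c k) (x k)) = sc (c k) (T (x k))"
    using T insert.prems unfolding lin_op_def by simp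
  also have "T (\<Sum>j\<in>A. sc (c j) (x j)) = (\<Sum>j\<in>A. sc (c j) (T (x j)))"
    using insert.IH insert.prems by blast
  finally show ?case
    by (simp only: sum.insert[OF insert.hyps])
qed (simp_all add: lin_op_zero[OF T])

lemma hlinear_imp_lin_op: "hlinear sc T \<Longrightarrow> lin_op sc UNIV T"
  by (simp add: hlinear_def lin_op_def hsubspace_def)

lemma hlinear_diff: "hlinear sc T \<Longrightarrow> T (x - y) = T x - T y"
  unfolding hlinear_def by (metis add_diff_cancel diff_add_cancel eq_diff_eq)

lemma hlinear_inv: "hlinear sc R \<Longrightarrow> bij R \<Longrightarrow> hlinear sc (inv R)"
  unfolding hlinear_def by (metis bij_inv_eq_iff)

lemma lin_op_similarity:
  assumes "lin_op sc Dm H" and "hlinear sc R" and "bij R"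
  shows "lin_op sc {f. R f \<in> Dm} (\<lambda>f. inv R (H (R f)))"
proof -
  have "hlinear sc (inv R)" using assms(2,3) by (rule hlinear_inv)
  with assms show ?thesis
    unfolding lin_op_def hsubspace_def hlinear_def
    by (simp add: lin_op_zero[OF assms(1)] lin_op_zero[OF hlinear_imp_lin_op[OF assms(2)]])
qed

lemma le_square_if_le_mult_sqrt:
  fixes s K :: real
  assumes "0 \<le> s" and "s \<le> K * sqrt s"
  shows "s \<le> K^2"
proof (cases "s = 0")
  case False
  then have "sqrt s * sqrt s \<le> K * sqrt s" and "sqrt s > 0"
    using assms by simp_all
  then have "sqrt s \<le> K"
    by (rule mult_right_le_imp_le)
  then show ?thesis
    using assms(1) by (metis real_sqrt_ge_zero real_sqrt_pow2 power_mono)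
qed simp

locale complex_hilbert_space =
  fixes sc :: "complex \<Rightarrow> 'h::ab_group_add \<Rightarrow> 'h" and ip :: "'h \<Rightarrow> 'h \<Rightarrow> complex"
  assumes hilbert: "complex_hilbert sc ip"
begin

lemma ip_add_right: "ip x (y + z) = ip x y + ip x z"
  using hilbert unfolding complex_hilbert_def by blast

lemma ip_scale_right: "ip x (sc c y) = c * ip x y"
  using hilbert unfolding complex_hilbert_def by blast

lemma ip_cnj_commute: "ip y x = cnj (ip x y)"
  using hilbert unfolding complex_hilbert_def by blast

lemma ip_self_nonneg: "Re (ip x x) \<ge> 0"
  using hilbert unfolding complex_hilbert_def by blast

lemma ip_self_eq_0: "ip x x = 0 \<Longrightarrow> x = 0"
  using hilbert unfolding complex_hilbert_def by blast

lemma hilbert_complete: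
  assumes "\<forall>\<epsilon>>0. \<exists>N. \<forall>m\<ge>N. \<forall>n\<ge>N. hnorm ip (X m - X n) < \<epsilon>"
  shows "\<exists>L. (\<lambda>n. hnorm ip (X n - L)) \<longlonglongrightarrow> 0"
proof -
  have "\<forall>X :: nat \<Rightarrow> 'h. (\<forall>\<epsilon>>0. \<exists>N. \<forall>m\<ge>N. \<forall>n\<ge>N. hnorm ip (X m - X n) < \<epsilon>) \<longrightarrow>
          (\<exists>L. \<forall>\<epsilon>>0. \<exists>N. \<forall>n\<ge>N. hnorm ip (X n - L) < \<epsilon>)"
    using hilbert unfolding complex_hilbert_def by (elim conjE)
  then obtain L where "\<forall>\<epsilon>>0. \<exists>N. \<forall>n\<ge>N. hnorm ip (X n - L) < \<epsilon>"
    using assms by blast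
  then have "(\<lambda>n. hnorm ip (X n - L)) \<longlonglongrightarrow> 0"
    by (intro LIMSEQ_I) (simp add: hnorm_def ip_self_nonneg)
  then show ?thesis ..
qed

lemma ip_add_left: "ip (x + y) z = ip x z + ip y z"
  by (metis ip_cnj_commute ip_add_right complex_cnj_add)

lemma ip_scale_left: "ip (sc c x) y = cnj c * ip x y"
  by (metis ip_cnj_commute ip_scale_right complex_cnj_mult)

lemma ip_diff_right: "ip x (y - z) = ip x y - ip x z"
  using ip_add_right[of x "y - z" z] by simp

lemma ip_diff_left: "ip (x - y) z = ip x z - ip y z"
  using ip_add_left[of "x - y" y z] by simp

lemma ip_zero_right: "ip x 0 = 0"
  using ip_diff_right[of x 0 0] by simp

lemma ip_zero_left: "ip 0 x = 0"
  using ip_diff_left[of 0 0 x] by simp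

lemma ip_sum_right: "ip x (sum f A) = (\<Sum>k\<in>A. ip x (f k))"
  by (induct A rule: infinite_finite_induct) (simp_all add: ip_add_right ip_zero_right)

lemma ip_sum_left: "ip (sum f A) x = (\<Sum>k\<in>A. ip (f k) x)"
  by (induct A rule: infinite_finite_induct) (simp_all add: ip_add_left ip_zero_left)

lemma ip_self_eq_Re: "ip x x = of_real (Re (ip x x))"
  by (metis Reals_cnj_iff complex_is_Real_iff ip_cnj_commute of_real_Re)

lemma hnorm_nonneg: "hnorm ip x \<ge> 0"
  by (simp add: hnorm_def ip_self_nonneg)

lemma hnorm_diff_commute: "hnorm ip (x - y) = hnorm ip (y - x)"
  unfolding hnorm_def by (simp add: ip_diff_left ip_diff_right algebra_simps)

lemma Cauchy_Schwarz: "cmod (ip x y) \<le> hnorm ip x * hnorm ip y"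
proof (cases "x = 0")
  case True
  then show ?thesis by (simp add: ip_zero_left hnorm_def)
next
  case False
  define n where "n = Re (ip x x)"
  define p where "p = ip x y"
  have xx: "ip x x = of_real n"
    unfolding n_def by (rule ip_self_eq_Re)
  have "n \<noteq> 0"
    using False ip_self_eq_0 xx by auto
  then have n: "n > 0"
    using ip_self_nonneg[of x] by (simp add: n_def)
  have yx: "ip y x = cnj p"
    unfolding p_def by (rule ip_cnj_commute)
  define t where "t = p / of_real n"
  have "ip (y - sc t x) (y - sc t x) = ip y y - t * cnj p - cnj t * p + cnj t * t * of_real n"
    by (simp add: ip_diff_left ip_diff_right ip_scale_left ip_scale_right xx yx
        algebra_simps flip: p_def)
  also have "\<dots> = ip y y - of_real ((cmod p)^2 / n)"
    using n by (simp add: t_def field_simps) (simp flip: complex_norm_square)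
  finally have "Re (ip (y - sc t x) (y - sc t x)) = Re (ip y y) - (cmod p)^2 / n"
    by simp
  then have "(cmod p)^2 / n \<le> Re (ip y y)"
    using ip_self_nonneg[of "y - sc t x"] by simp
  then have "(cmod p)^2 \<le> n * Re (ip y y)"
    using n by (simp add: pos_divide_le_eq mult.commute)
  also have "\<dots> = (hnorm ip x * hnorm ip y)^2"
    by (simp add: hnorm_def n_def power_mult_distrib ip_self_nonneg)
  finally have "(cmod p)^2 \<le> (hnorm ip x * hnorm ip y)^2" .
  then show ?thesis
    unfolding p_def by (rule power2_le_imp_le) (simp add: hnorm_nonneg)
qed

lemma ip_tendsto_right:
  assumes "(\<lambda>n. hnorm ip (X n - L)) \<longlonglongrightarrow> 0"
  shows "(\<lambda>n. ip z (X n)) \<longlonglongrightarrow> ip z L"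
proof (rule LIM_zero_cancel, rule Lim_null_comparison)
  show "\<forall>\<^sub>F n in sequentially. cmod (ip z (X n) - ip z L) \<le> hnorm ip z * hnorm ip (X n - L)"
    by (simp add: Cauchy_Schwarz flip: ip_diff_right)
  show "(\<lambda>n. hnorm ip z * hnorm ip (X n - L)) \<longlonglongrightarrow> 0"
    using tendsto_mult_right_zero[OF assms] .
qed

lemma bounded_op_tendsto:
  assumes "hlinear sc T" "hbounded ip T" and "(\<lambda>n. hnorm ip (X n - L)) \<longlonglongrightarrow> 0"
  shows "(\<lambda>n. hnorm ip (T (X n) - T L)) \<longlonglongrightarrow> 0"
proof -
  obtain C where C: "\<And>x. hnorm ip (T x) \<le> C * hnorm ip x"
    using assms(2) unfolding hbounded_def by blast
  show ?thesis
  proof (rule Lim_null_comparison)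
    show "\<forall>\<^sub>F n in sequentially. norm (hnorm ip (T (X n) - T L)) \<le> C * hnorm ip (X n - L)"
      using C by (simp add: hnorm_nonneg flip: hlinear_diff[OF assms(1)])
    show "(\<lambda>n. C * hnorm ip (X n - L)) \<longlonglongrightarrow> 0"
      using tendsto_mult_right_zero[OF assms(3)] .
  qed
qed

end

locale hilbert_space_onb = complex_hilbert_space +
  fixes e :: "nat \<Rightarrow> 'h::ab_group_add"
  assumes onb: "orthonormal_basis ip e"
begin

lemma ip_basis: "ip (e n) (e m) = (if n = m then 1 else 0)"
  using onb by (simp add: orthonormal_basis_def)

lemma basis_ext:
  assumes "\<And>k. ip z (e k) = ip w (e k)"
  shows "z = w"
proof -
  have "ip (e k) (z - w) = 0" for k
    using assms[of k] ip_cnj_commute[of "e k" "z - w"] by (simp add: ip_diff_left)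
  then have "z - w = 0"
    using onb unfolding orthonormal_basis_def by blast
  then show ?thesis by simp
qed

lemma ip_basis_sum:
  assumes "finite A"
  shows "ip (e n) (\<Sum>k\<in>A. sc (c k) (e k)) = (if n \<in> A then c n else 0)"
proof -
  have "ip (e n) (\<Sum>k\<in>A. sc (c k) (e k)) = (\<Sum>k\<in>A. if n = k then c k else 0)"
    by (simp add: ip_sum_right ip_scale_right ip_basis if_distrib cong: if_cong)
  then show ?thesis using assms by simp
qed

lemma ip_basis_sum_self:
  assumes "finite A"
  shows "ip (\<Sum>k\<in>A. sc (c k) (e k)) (\<Sum>k\<in>A. sc (c k) (e k)) = of_real (\<Sum>k\<in>A. (cmod (c k))^2)"
  using assms by (simp add: ip_sum_left ip_scale_left ip_basis_sum mult.commute[of "cnj _"]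
      flip: complex_norm_square)

lemma hnorm_basis_sum:
  assumes "finite A"
  shows "hnorm ip (\<Sum>k\<in>A. sc (c k) (e k)) = sqrt (\<Sum>k\<in>A. (cmod (c k))^2)"
  by (simp add: hnorm_def ip_basis_sum_self[OF assms])

lemma basis_partial_sums_Cauchy:
  assumes "summable (\<lambda>k. (cmod (c k))^2)"
  shows "\<forall>\<epsilon>>0. \<exists>N. \<forall>m\<ge>N. \<forall>n\<ge>N.
           hnorm ip ((\<Sum>k<m. sc (c k) (e k)) - (\<Sum>k<n. sc (c k) (e k))) < \<epsilon>"
proof -
  define S where "S N = (\<Sum>k<N. (cmod (c k))^2)" for N
  have dist: "hnorm ip ((\<Sum>k<m. sc (c k) (e k)) - (\<Sum>k<n. sc (c k) (e k))) = sqrt \<bar>S m - S n\<bar>"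
    if "n \<le> m" for m n
  proof -
    have "(\<Sum>k<m. sc (c k) (e k)) - (\<Sum>k<n. sc (c k) (e k)) = (\<Sum>k\<in>{n..<m}. sc (c k) (e k))"
      and "S m - S n = (\<Sum>k\<in>{n..<m}. (cmod (c k))^2)"
      using sum_diff_nat_ivl[of 0 n m] that by (simp_all add: S_def lessThan_atLeast0)
    then show ?thesis
      by (simp add: hnorm_basis_sum sum_nonneg)
  qed
  have "Cauchy S"
    using assms unfolding S_def summable_iff_convergent by (rule convergent_Cauchy)
  show ?thesis
  proof (intro allI impI)
    fix \<epsilon> :: real
    assume "\<epsilon> > 0"
    then obtain N where N: "\<forall>m\<ge>N. \<forall>n\<ge>N. \<bar>S m - S n\<bar> < \<epsilon>^2"
      using \<open>Cauchy S\<close> by (metis CauchyD real_norm_def zero_less_power)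
    have "sqrt \<bar>S m - S n\<bar> < \<epsilon>" if "m \<ge> N" "n \<ge> N" for m n
      using N that \<open>\<epsilon> > 0\<close> by (simp add: real_sqrt_less_iff real_less_lsqrt)
    then show "\<exists>N. \<forall>m\<ge>N. \<forall>n\<ge>N.
                 hnorm ip ((\<Sum>k<m. sc (c k) (e k)) - (\<Sum>k<n. sc (c k) (e k))) < \<epsilon>"
      by (metis dist hnorm_diff_commute abs_minus_commute nat_le_linear)
  qed
qed

lemma Riesz_Fischer:
  assumes "\<And>N. (\<Sum>k<N. (cmod (c k))^2) \<le> B"
  obtains L where "(\<lambda>N. hnorm ip ((\<Sum>k<N. sc (c k) (e k)) - L)) \<longlonglongrightarrow> 0"
    and "\<And>n. ip (e n) L = c n"
proof -
  have "summable (\<lambda>k. (cmod (c k))^2)"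
    using assms by (intro summableI_nonneg_bounded) auto
  then obtain L where L: "(\<lambda>N. hnorm ip ((\<Sum>k<N. sc (c k) (e k)) - L)) \<longlonglongrightarrow> 0"
    using hilbert_complete[OF basis_partial_sums_Cauchy] by blast
  have "ip (e n) L = c n" for n
  proof -
    have "\<forall>\<^sub>F N in sequentially. ip (e n) (\<Sum>k<N. sc (c k) (e k)) = c n"
      unfolding eventually_sequentially by (intro exI[of _ "Suc n"]) (simp add: ip_basis_sum)
    with ip_tendsto_right[OF L, of "e n"] have "(\<lambda>N. c n) \<longlonglongrightarrow> ip (e n) L"
      by (rule Lim_transform_eventually)
    then show ?thesis
      using LIMSEQ_unique tendsto_const by metis
  qed
  with L that show ?thesis by blast
qed

lemma Bessel_inequality: "(\<Sum>k<N. (cmod (ip (e k) x))^2) \<le> Re (ip x x)"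
proof -
  define s where "s = (\<Sum>k<N. (cmod (ip (e k) x))^2)"
  define y where "y = (\<Sum>k<N. sc (ip (e k) x) (e k))"
  have yx: "ip y x = of_real s"
    by (simp add: y_def s_def ip_sum_left ip_scale_left mult.commute[of "cnj _"]
        flip: complex_norm_square)
  then have xy: "ip x y = of_real s"
    by (subst ip_cnj_commute) simp
  have yy: "ip y y = of_real s"
    unfolding y_def s_def by (rule ip_basis_sum_self) simp
  have "ip (x - y) (x - y) = ip x x - ip x y - ip y x + ip y y"
    by (simp add: ip_diff_left ip_diff_right)
  also have "\<dots> = ip x x - of_real s"
    by (simp add: xy yx yy)
  finally show ?thesis
    using ip_self_nonneg[of "x - y"] by (simp add: s_def)
qed

lemma Fourier_expansion: "(\<lambda>N. hnorm ip ((\<Sum>k<N. sc (ip (e k) x) (e k)) - x)) \<longlonglongrightarrow> 0"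
proof -
  obtain L where L: "(\<lambda>N. hnorm ip ((\<Sum>k<N. sc (ip (e k) x) (e k)) - L)) \<longlonglongrightarrow> 0"
    and coeff: "\<And>n. ip (e n) L = ip (e n) x"
    using Riesz_Fischer[OF Bessel_inequality] by blast
  have "ip L (e n) = ip x (e n)" for n
    using coeff[of n] ip_cnj_commute[of "e n" L] ip_cnj_commute[of "e n" x] by simp
  then have "L = x"
    by (rule basis_ext)
  with L show ?thesis by simp
qed

lemma bounded_adjoint_exists:
  assumes T: "hlinear sc T" "hbounded ip T"
  obtains z where "\<And>x. ip z x = ip y (T x)"
proof -
  obtain C where C: "\<And>x. hnorm ip (T x) \<le> C * hnorm ip x"
    using T(2) unfolding hbounded_def by blast
  have T_sum: "T (\<Sum>k\<in>A. sc (c k) (x k)) = (\<Sum>k\<in>A. sc (c k) (T (x k)))" for A c x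
    by (rule lin_op_sum[OF hlinear_imp_lin_op[OF T(1)]]) simp
  (* The coefficients of the adjoint vector; testing T against their own partial sums u
     gives s <= |y| C sqrt s for the partial sums s of their squared moduli. *)
  define \<alpha> where "\<alpha> k = cnj (ip y (T (e k)))" for k
  have "(\<Sum>k<N. (cmod (\<alpha> k))^2) \<le> (hnorm ip y * C)^2" for N
  proof -
    define s where "s = (\<Sum>k<N. (cmod (\<alpha> k))^2)"
    define u where "u = (\<Sum>k<N. sc (\<alpha> k) (e k))"
    have s_nonneg: "0 \<le> s"
      by (simp add: s_def sum_nonneg)
    have "of_real s = ip y (T u)"
      by (simp add: s_def u_def \<alpha>_def T_sum ip_sum_right ip_scale_right mult.commute[of "cnj _"]
          flip: complex_norm_square)
    then have "s = cmod (ip y (T u))"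
      using s_nonneg by (metis abs_of_nonneg norm_of_real)
    also have "\<dots> \<le> hnorm ip y * (C * hnorm ip u)"
      using Cauchy_Schwarz C hnorm_nonneg by (meson mult_left_mono order_trans)
    also have "hnorm ip u = sqrt s"
      by (simp add: u_def s_def hnorm_basis_sum)
    finally have "s \<le> (hnorm ip y * C) * sqrt s"
      by (simp add: mult.assoc)
    then show ?thesis
      using le_square_if_le_mult_sqrt s_nonneg by (simp add: s_def)
  qed
  then obtain z where z: "\<And>n. ip (e n) z = \<alpha> n"
    using Riesz_Fischer by blast
  have "ip z x = ip y (T x)" for x
  proof -
    define xs where "xs N = (\<Sum>k<N. sc (ip (e k) x) (e k))" for N
    have xs: "(\<lambda>N. hnorm ip (xs N - x)) \<longlonglongrightarrow> 0"
      unfolding xs_def by (rule Fourier_expansion)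
    have "ip z (e k) = ip y (T (e k))" for k
      using z[of k] ip_cnj_commute[of "e k" z] by (simp add: \<alpha>_def)
    then have "ip z (xs N) = ip y (T (xs N))" for N
      by (simp add: xs_def T_sum ip_sum_right ip_scale_right)
    then have "(\<lambda>N. ip y (T (xs N))) \<longlonglongrightarrow> ip z x"
      using ip_tendsto_right[OF xs, of z] by simp
    moreover have "(\<lambda>N. ip y (T (xs N))) \<longlonglongrightarrow> ip y (T x)"
      by (rule ip_tendsto_right[OF bounded_op_tendsto[OF T xs]])
    ultimately show ?thesis
      by (rule LIMSEQ_unique)
  qed
  with that show ?thesis by blast
qed

lemma badj_eq:
  assumes "hlinear sc T" "hbounded ip T"
  shows "ip (badj ip T y) x = ip y (T x)"
proof -
  obtain z where z: "\<And>x. ip z x = ip y (T x)"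
    using bounded_adjoint_exists[OF assms] by blast
  have "badj ip T y = z"
    unfolding badj_def by (rule the_equality) (use z basis_ext in auto)
  with z show ?thesis by simp
qed

lemma adj_op_eq:
  assumes "\<And>k. e k \<in> Dm" and "g \<in> adj_dom ip Dm T" and "f \<in> Dm"
  shows "ip (adj_op ip Dm T g) f = ip g (T f)"
proof -
  obtain h where h: "\<forall>f\<in>Dm. ip g (T f) = ip h f"
    using assms(2) unfolding adj_dom_def by blast
  have "adj_op ip Dm T g = h"
    unfolding adj_op_def by (rule the_equality) (use h assms(1) basis_ext in metis)+
  with h assms(3) show ?thesis by simp
qed

lemma self_adjoint_op_symmetric:
  assumes "\<And>k. e k \<in> Dm" and "self_adjoint_op ip Dm T" and "f \<in> Dm" "g \<in> Dm"
  shows "ip f (T g) = ip (T f) g"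
  using adj_op_eq[of Dm f T g] assms unfolding self_adjoint_op_def by auto

lemma symmetric_on_span_if_hermitian:
  assumes T: "lin_op sc Dm T" and e: "\<And>k. e k \<in> Dm"
    and herm: "\<And>n m. ip (e n) (T (e m)) = cnj (ip (e m) (T (e n)))"
    and "f \<in> hspan sc e" "g \<in> hspan sc e"
  shows "ip f (T g) = ip (T f) g"
proof -
  obtain N c M d where f: "f = (\<Sum>n<N. sc (c n) (e n))" and g: "g = (\<Sum>m<M. sc (d m) (e m))"
    using assms(4,5) unfolding hspan_def by blast
  have herm': "ip (T (e m)) (e n) = ip (e m) (T (e n))" for n m
    using herm[of m n] ip_cnj_commute[of "e n" "T (e m)"] by simp
  have "ip (e n) (T g) = ip (T (e n)) g" for n
    by (simp add: g lin_op_sum[OF T] e ip_sum_right ip_scale_right herm')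
  then show ?thesis
    by (simp add: f lin_op_sum[OF T] e ip_sum_left ip_scale_left)
qed

end

definition tridiagonal ::
  "(nat \<Rightarrow> complex) \<Rightarrow> (nat \<Rightarrow> complex) \<Rightarrow> (nat \<Rightarrow> complex) \<Rightarrow> nat \<Rightarrow> nat \<Rightarrow> complex" where
  "tridiagonal b a b' n m =
     (if n = m + 1 then b n else 0) + (if n = m then a n else 0) + (if n + 1 = m then b' n else 0)"

lemma tridiagonal_hermitian_iff:
  assumes "b 0 = 0"
  shows "(\<forall>n m. tridiagonal b a b' n m = cnj (tridiagonal b a b' m n)) \<longleftrightarrow>
           (\<forall>n. a n \<in> \<real>) \<and> (\<forall>m. b m = (if m = 0 then 0 else cnj (b' (m - 1))))"
proof
  assume herm: "\<forall>n m. tridiagonal b a b' n m = cnj (tridiagonal b a b' m n)"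
  have "a n \<in> \<real>" for n
    using herm[rule_format, of n n] by (simp add: tridiagonal_def Reals_cnj_iff)
  moreover have "b (Suc m) = cnj (b' m)" for m
    using herm[rule_format, of "Suc m" m] by (simp add: tridiagonal_def)
  ultimately show "(\<forall>n. a n \<in> \<real>) \<and> (\<forall>m. b m = (if m = 0 then 0 else cnj (b' (m - 1))))"
    using assms by (auto simp: gr0_conv_Suc)
next
  assume "(\<forall>n. a n \<in> \<real>) \<and> (\<forall>m. b m = (if m = 0 then 0 else cnj (b' (m - 1))))"
  then have "cnj (a n) = a n" and "b (Suc n) = cnj (b' n)" for n
    by (simp_all add: Reals_cnj_iff)
  then show "\<forall>n m. tridiagonal b a b' n m = cnj (tridiagonal b a b' m n)"
    by (auto simp: tridiagonal_def)
qed

theorem lemma3: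
  fixes sc :: "complex \<Rightarrow> 'h::ab_group_add \<Rightarrow> 'h"
    and ip :: "'h \<Rightarrow> 'h \<Rightarrow> complex"
    and D :: "'h set" and e :: "nat \<Rightarrow> 'h" and R :: "'h \<Rightarrow> 'h"
    and domH :: "'h set" and H :: "'h \<Rightarrow> 'h"
    and a b b' :: "nat \<Rightarrow> complex"
  assumes hilb: "complex_hilbert sc ip"
    and D_sub: "hsubspace sc D" and D_dense: "hdense ip D"
    and onb: "orthonormal_basis ip e" and e_D: "\<forall>n. e n \<in> D"
    and R_lin: "hlinear sc R" and R_bdd: "hbounded ip R" and R_bij: "bij R"
    and Rinv_bdd: "hbounded ip (inv R)"
    and D_R: "R ` D \<subseteq> D" and D_Radj: "badj ip R ` D \<subseteq> D"
    and D_Rinv: "inv R ` D \<subseteq> D" and D_Rinvadj: "badj ip (inv R) ` D \<subseteq> D"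
    and H_op: "lin_op sc domH H"
    and domH: "D \<subseteq> domH" and domHadj: "D \<subseteq> adj_dom ip domH H"
    and H_D: "H ` D \<subseteq> D"
    and tridiag: "\<forall>n m. ip (badj ip (inv R) (e n)) (H (R (e m))) =
                     (if n = m + 1 then b n else 0) + (if n = m then a n else 0)
                   + (if n + 1 = m then b' n else 0)"
    and b0: "b 0 = 0"
  shows "(self_adjoint_op ip {f. R f \<in> domH} (\<lambda>f. inv R (H (R f))) \<longrightarrow>
            (\<forall>n. a n \<in> \<real>) \<and> (\<forall>m. b m = (if m = 0 then 0 else cnj (b' (m - 1)))))
       \<and> (((\<forall>m. a m \<in> \<real>) \<and> (\<forall>m. b m = (if m = 0 then 0 else cnj (b' (m - 1))))) \<longrightarrow>
            (\<forall>f\<in>hspan sc e. \<forall>g\<in>hspan sc e.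
               ip f (inv R (H (R g))) = ip (inv R (H (R f))) g))"
proof -
  interpret hilbert_space_onb sc ip e
    using hilb onb by unfold_locales
  let ?H0 = "\<lambda>f. inv R (H (R f))" and ?dom = "{f. R f \<in> domH}"
  let ?coeffs = "(\<forall>n. a n \<in> \<real>) \<and> (\<forall>m. b m = (if m = 0 then 0 else cnj (b' (m - 1))))"
  have H0: "lin_op sc ?dom ?H0"
    using H_op R_lin R_bij by (rule lin_op_similarity)
  have e_dom: "e k \<in> ?dom" for k
    using e_D D_R domH by blast
  have matrix: "ip (e n) (?H0 (e m)) = tridiagonal b a b' n m" for n m
    using tridiag badj_eq[OF hlinear_inv[OF R_lin R_bij] Rinv_bdd] by (simp add: tridiagonal_def)
  have hermitian_iff: "(\<forall>n m. ip (e n) (?H0 (e m)) = cnj (ip (e m) (?H0 (e n)))) \<longleftrightarrow> ?coeffs"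
    unfolding matrix by (rule tridiagonal_hermitian_iff[of b, OF b0])
  show ?thesis
  proof (rule conjI; intro impI)
    assume self_adjoint: "self_adjoint_op ip ?dom ?H0"
    have "ip (e n) (?H0 (e m)) = cnj (ip (e m) (?H0 (e n)))" for n m
      using self_adjoint_op_symmetric[OF e_dom self_adjoint e_dom e_dom]
        ip_cnj_commute[of "e m" "?H0 (e n)"] by simp
    with hermitian_iff show ?coeffs by blast
  next
    assume ?coeffs
    with hermitian_iff show "\<forall>f\<in>hspan sc e. \<forall>g\<in>hspan sc e. ip f (?H0 g) = ip (?H0 f) g"
      using symmetric_on_span_if_hermitian[OF H0 e_dom] by blast
  qed
qed

end
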